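(* Let $X$ be a Banach space with $n(X)=1$ that has the BPBpp-nu. Then $X$ is uniformly smooth.
   Context: Let $X$ be a Banach space over $\mathbb{K}\in\{\mathbb{R},\mathbb{C}\}$, $\mathcal{L}(X)$ the bounded linear operators on $X$. $\Pi(X)=\{(x,x^* )\in S_X\times S_{X^*}: x^*(x)=1\}$; $v(T)=\sup\{|x^*(Tx)|:(x,x^* )\in\Pi(X)\}$; $n(X)=\inf\{v(T): T\in\mathcal{L}(X),\ \|T\|=1\}$. $X$ has the BPBpp-nu if for every $\varepsilon>0$ there is $\eta(\varepsilon)>0$ such that whenever $T\in\mathcal{L}(X)$ with $v(T)=1$ and $(x,x^* )\in\Pi(X)$ satisfy $|x^*(Tx)|>1-\eta(\varepsilon)$, there exists $S\in\mathcal{L}(X)$ with $v(S)=1$, $|x^*(Sx)|=1$ and $\|S-T\|<\varepsilon$. *)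

theory Defs
  imports "HOL-Analysis.Analysis"
begin

(* Scalar field K in {R, C}: modelled as a real normed field 'k (by Ostrowski's theorem
   every real normed field, i.e. a field extension of R with a multiplicative norm
   extending |.|, is isomorphic to R or C).  The Banach space X is a real Banach space
   'a :: banach together with a compatible scalar multiplication sm by elements of 'k. *)

definition scalar_action :: "('k::real_normed_field \<Rightarrow> 'a::real_normed_vector \<Rightarrow> 'a) \<Rightarrow> bool" where
  "scalar_action sm \<longleftrightarrow>
     (\<forall>r x. sm (of_real r) x = r *\<^sub>R x) \<and>
     (\<forall>a b x. sm (a * b) x = sm a (sm b x)) \<and>
     (\<forall>a b x. sm (a + b) x = sm a x + sm b x) \<and>
     (\<forall>a x y. sm a (x + y) = sm a x + sm a y) \<and>
     (\<forall>a x. norm (sm a x) = norm a * norm x)"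

definition K_operator :: "('k::real_normed_field \<Rightarrow> 'a::real_normed_vector \<Rightarrow> 'a) \<Rightarrow> ('a \<Rightarrow>\<^sub>L 'a) \<Rightarrow> bool" where
  "K_operator sm T \<longleftrightarrow> (\<forall>c x. blinfun_apply T (sm c x) = sm c (blinfun_apply T x))"

definition K_functional :: "('k::real_normed_field \<Rightarrow> 'a::real_normed_vector \<Rightarrow> 'a) \<Rightarrow> ('a \<Rightarrow>\<^sub>L 'k) \<Rightarrow> bool" where
  "K_functional sm f \<longleftrightarrow> (\<forall>c x. blinfun_apply f (sm c x) = c * blinfun_apply f x)"

definition Pi_X :: "('k::real_normed_field \<Rightarrow> 'a::real_normed_vector \<Rightarrow> 'a) \<Rightarrow> ('a \<times> ('a \<Rightarrow>\<^sub>L 'k)) set" where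
  "Pi_X sm = {(x, f). norm x = 1 \<and> K_functional sm f \<and> norm f = 1 \<and> blinfun_apply f x = 1}"

definition num_radius :: "('k::real_normed_field \<Rightarrow> 'a::real_normed_vector \<Rightarrow> 'a) \<Rightarrow> ('a \<Rightarrow>\<^sub>L 'a) \<Rightarrow> real" where
  "num_radius sm T = Sup ((\<lambda>(x, f). norm (blinfun_apply f (blinfun_apply T x))) ` Pi_X sm)"

definition num_index :: "('k::real_normed_field \<Rightarrow> 'a::real_normed_vector \<Rightarrow> 'a) \<Rightarrow> real" where
  "num_index sm = Inf {num_radius sm T | T. K_operator sm T \<and> norm T = 1}"

definition BPBpp_nu :: "('k::real_normed_field \<Rightarrow> 'a::real_normed_vector \<Rightarrow> 'a) \<Rightarrow> bool" where
  "BPBpp_nu sm \<longleftrightarrow>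
     (\<forall>\<epsilon>>0. \<exists>\<eta>>0. \<forall>T x f.
        K_operator sm T \<and> num_radius sm T = 1 \<and> (x, f) \<in> Pi_X sm \<and>
        norm (blinfun_apply f (blinfun_apply T x)) > 1 - \<eta> \<longrightarrow>
        (\<exists>S. K_operator sm S \<and> num_radius sm S = 1 \<and>
             norm (blinfun_apply f (blinfun_apply S x)) = 1 \<and> norm (S - T) < \<epsilon>))"

definition modulus_smoothness :: "'a::real_normed_vector itself \<Rightarrow> real \<Rightarrow> real" where
  "modulus_smoothness _ \<tau> =
     Sup {(norm (x + \<tau> *\<^sub>R y) + norm (x - \<tau> *\<^sub>R y)) / 2 - 1 | x y :: 'a. norm x = 1 \<and> norm y = 1}"

definition uniformly_smooth :: "'a::real_normed_vector itself \<Rightarrow> bool" where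
  "uniformly_smooth A \<longleftrightarrow> ((\<lambda>\<tau>. modulus_smoothness A \<tau> / \<tau>) \<longlongrightarrow> 0) (at_right 0)"

end

theory Submission
  imports Defs "HOL-Computational_Algebra.Polynomial"
begin

(* Since n(X) = 1, a rank-one operator y |-> k(y) q built from a norm-one functional k and a unit
   vector q has numerical radius 1; applying the BPBpp-nu to it and composing the resulting
   operator with a functional norming q shows: a norm-one functional k that almost norms a unit
   vector q is close to a functional of norm at most 1 that norms q.  Now let x, y be unit vectors,
   tau small and k a functional norming x.  Then k almost norms x + tau y and x - tau y (after
   normalisation), so there are functionals h and g norming them with |h - k|, |g - k| = O(eps + tau).
   Hence |x + tau y| + |x - tau y| = h x + g x + tau (h - g) y <= 2 + tau O(eps + tau), i.e. the
   modulus of smoothness is o(tau).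

   Norming functionals exist by the real Hahn-Banach theorem, transferred to the scalar field,
   which is R or C because every element x of a real normed field is a root of a real quadratic
   (Mazur): otherwise |(x - z)(x - cnj z)| would attain a positive minimum at some z0 of maximal
   modulus among all minimisers, and comparing with the product over the points
   z0 + w * (n-th roots of unity) shows that the minimum is also attained at z0 + w for small w
   pointing away from 0. *)

section \<open>Real normed fields are \<open>\<real>\<close> or \<open>\<complex>\<close>\<close>

lemma map_poly_of_real_add:
  "map_poly (of_real :: real \<Rightarrow> 'a::real_algebra_1) (p + q) = map_poly of_real p + map_poly of_real q"
  by (intro poly_eqI) (simp add: coeff_map_poly)

lemma map_poly_of_real_diff:
  "map_poly (of_real :: real \<Rightarrow> 'a::real_algebra_1) (p - q) = map_poly of_real p - map_poly of_real q"
  by (intro poly_eqI) (simp add: coeff_map_poly)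

lemma map_poly_of_real_mult:
  "map_poly (of_real :: real \<Rightarrow> 'a::{real_algebra_1,comm_ring_1}) (p * q) = map_poly of_real p * map_poly of_real q"
  by (intro poly_eqI) (simp add: coeff_map_poly coeff_mult)

lemma map_poly_of_real_power:
  "map_poly (of_real :: real \<Rightarrow> 'a::{real_algebra_1,comm_ring_1}) (p ^ n) = map_poly of_real p ^ n"
  by (induction n) (simp_all add: map_poly_of_real_mult)

lemma map_poly_of_real_prod:
  "map_poly (of_real :: real \<Rightarrow> 'a::{real_algebra_1,comm_ring_1}) (prod f A) = (\<Prod>k\<in>A. map_poly of_real (f k))"
  by (induction A rule: infinite_finite_induct) (simp_all add: map_poly_of_real_mult)

lemma map_poly_of_real_smult:
  "map_poly (of_real :: real \<Rightarrow> 'a::{real_algebra_1,comm_ring_1}) (smult c p) = smult (of_real c) (map_poly of_real p)"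
  by (intro poly_eqI) (simp add: coeff_map_poly)

lemma map_poly_of_real_inj:
  "map_poly (of_real :: real \<Rightarrow> 'a::real_algebra_1) p = map_poly of_real q \<Longrightarrow> p = q"
  by (simp add: poly_eq_iff coeff_map_poly)

lemma map_poly_cnj_diff: "map_poly cnj (p - q) = map_poly cnj p - map_poly cnj q"
  by (intro poly_eqI) (simp add: coeff_map_poly)

lemma map_poly_cnj_smult: "map_poly cnj (smult c p) = smult (cnj c) (map_poly cnj p)"
  by (intro poly_eqI) (simp add: coeff_map_poly)

lemma map_poly_cnj_mult: "map_poly cnj (p * q) = map_poly cnj p * map_poly cnj q"
  by (intro poly_eqI) (simp add: coeff_map_poly coeff_mult)

lemma map_poly_cnj_prod: "map_poly cnj (prod f A) = (\<Prod>k\<in>A. map_poly cnj (f k))"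
  by (induction A rule: infinite_finite_induct) (simp_all add: map_poly_cnj_mult)

lemma map_poly_cnj_power: "map_poly cnj (p ^ n) = map_poly cnj p ^ n"
  by (induction n) (simp_all add: map_poly_cnj_mult)

lemma map_poly_of_real_Re: "smult 2 (map_poly of_real (map_poly Re p)) = p + map_poly cnj p"
  by (intro poly_eqI) (simp add: coeff_map_poly complex_eq_iff)

lemma norm_poly_map_poly_Re_le:
  fixes x :: "'a::{real_normed_algebra_1,comm_ring_1}"
  shows "norm (poly (map_poly of_real (map_poly Re p)) x) \<le> poly (map_poly cmod p) (norm x)"
proof (induction p rule: pCons_induct)
  case (pCons a p)
  have "norm (x * poly (map_poly of_real (map_poly Re p)) x)
      \<le> norm x * norm (poly (map_poly of_real (map_poly Re p)) x)"
    by (rule norm_mult_ineq)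
  also have "\<dots> \<le> norm x * poly (map_poly cmod p) (norm x)"
    by (rule mult_left_mono[OF pCons.IH]) simp
  finally have "norm (of_real (Re a) + x * poly (map_poly of_real (map_poly Re p)) x)
      \<le> cmod a + norm x * poly (map_poly cmod p) (norm x)"
    using abs_Re_le_cmod[of a] by (intro norm_triangle_le add_mono) auto
  then show ?case
    using pCons.hyps by (simp add: map_poly_pCons)
qed simp

lemma map_poly_cmod_smult: "map_poly cmod (smult c p) = smult (cmod c) (map_poly cmod p)"
  by (intro poly_eqI) (simp add: coeff_map_poly norm_mult)

lemma map_poly_cmod_linear_power: "map_poly cmod ([:-z, 1:] ^ n) = [:cmod z, 1:] ^ n"
proof (intro poly_eqI)
  fix i
  show "coeff (map_poly cmod ([:-z, 1:] ^ n)) i = coeff ([:cmod z, 1:] ^ n) i"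
  proof (cases "i \<le> n")
    case True
    then show ?thesis
      by (simp add: coeff_map_poly coeff_linear_poly_power norm_mult norm_power)
  next
    case False
    then show ?thesis
      by (simp add: coeff_map_poly coeff_eq_0 degree_linear_power)
  qed
qed

lemma prod_linear_roots_unity:
  fixes a b :: complex
  assumes n: "n > 0" and b: "b \<noteq> 0"
  shows "(\<Prod>k<n. [:-(a + b * cis (2 * pi * real k / real n)), 1:]) = [:-a, 1:] ^ n - [:b ^ n:]"
proof (rule ccontr)
  define r where "r k = cis (2 * pi * real k / real n)" for k
  have roots: "bij_betw r {..<n} {z. z ^ n = 1}"
    unfolding r_def by (rule Complex.bij_betw_roots_unity[OF n])
  define P where "P = (\<Prod>k<n. [:-(a + b * r k), 1:])"
  define D where "D = [:-a, 1:] ^ n - [:b ^ n:] - P"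
  assume "\<not> ?thesis"
  then have D0: "D \<noteq> 0" by (simp add: D_def P_def r_def)
  have "degree P = n"
    unfolding P_def by (subst degree_prod_eq_sum_degree) auto
  moreover have "lead_coeff P = 1"
    unfolding P_def by (simp add: lead_coeff_prod)
  moreover have "degree ([:-a, 1:] ^ n) = n" "coeff ([:-a, 1:] ^ n) n = 1"
    by (simp_all add: degree_linear_power coeff_linear_power)
  ultimately have "coeff D i = 0" if "i \<ge> n" for i
    using that n by (cases "i = n") (auto simp: D_def coeff_eq_0)
  then have "degree D \<le> n - 1"
    using n by (intro degree_le) auto
  then have degD: "degree D < n"
    using n by simp
  have roots_D: "(\<lambda>k. a + b * r k) ` {..<n} \<subseteq> {x. poly D x = 0}"
  proof (rule image_subsetI)
    fix k assume k: "k \<in> {..<n}"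
    then have "r k ^ n = 1" using roots by (auto simp: bij_betw_def)
    moreover have "poly P (a + b * r k) = 0"
      unfolding P_def poly_prod using k by (intro prod_zero) auto
    ultimately show "a + b * r k \<in> {x. poly D x = 0}"
      by (simp add: D_def power_mult_distrib)
  qed
  have "inj_on (\<lambda>k. a + b * r k) {..<n}"
    using roots b by (auto simp: bij_betw_def inj_on_def)
  then have "n = card ((\<lambda>k. a + b * r k) ` {..<n})"
    by (simp add: card_image)
  also have "\<dots> \<le> card {x. poly D x = 0}"
    by (intro card_mono poly_roots_finite[OF D0] roots_D)
  also have "\<dots> \<le> degree D"
    by (rule card_poly_roots_bound[OF D0])
  finally show False
    using degD by simp
qed

text \<open>\<open>(X - z) (X - cnj z)\<close> has real coefficients, so it can be evaluated in any real normed field.\<close>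

definition quad_poly :: "complex \<Rightarrow> real poly" where
  "quad_poly z = [:(cmod z)\<^sup>2, -2 * Re z, 1:]"

lemma map_poly_of_real_quad_poly: "map_poly of_real (quad_poly z) = [:-z, 1:] * [:-cnj z, 1:]"
proof -
  have "z * cnj z = complex_of_real ((cmod z)\<^sup>2)"
    using complex_norm_square[of z] by simp
  moreover have "- z - cnj z = complex_of_real (-2 * Re z)"
    by (simp add: complex_eq_iff)
  ultimately show ?thesis
    by (simp add: quad_poly_def map_poly_pCons algebra_simps)
qed

lemma poly_quad_poly:
  "poly (map_poly of_real (quad_poly z)) x = x * x - of_real (2 * Re z) * x + of_real ((cmod z)\<^sup>2)"
  by (simp add: quad_poly_def map_poly_pCons algebra_simps)

lemma prod_quad_poly_roots_unity:
  fixes z w :: complex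
  assumes n: "n > 0" and w: "w \<noteq> 0"
  shows "(\<Prod>k<n. quad_poly (z + w * cis (2 * pi * real k / real n))) =
    quad_poly z ^ n - smult 2 (map_poly Re (smult (cnj w ^ n) ([:-z, 1:] ^ n))) + [:cmod w ^ (2 * n):]"
proof (rule map_poly_of_real_inj[where 'a = complex])
  define P where "P = [:-z, 1:] ^ n"
  define c where "c = w ^ n"
  have cnj_P: "map_poly cnj P = [:-cnj z, 1:] ^ n"
    by (simp add: P_def map_poly_cnj_power map_poly_pCons)
  define zk where "zk k = z + w * cis (2 * pi * real k / real n)" for k
  have cnj_prod: "(\<Prod>k<n. [:-cnj (zk k), 1:]) = map_poly cnj (\<Prod>k<n. [:-zk k, 1:])"
    by (simp add: map_poly_cnj_prod map_poly_pCons)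
  have "map_poly of_real (\<Prod>k<n. quad_poly (zk k))
      = (\<Prod>k<n. [:-zk k, 1:]) * map_poly cnj (\<Prod>k<n. [:-zk k, 1:])"
    by (simp only: map_poly_of_real_prod map_poly_of_real_quad_poly prod.distrib cnj_prod)
  also have "\<dots> = (P - [:c:]) * (map_poly cnj P - [:cnj c:])"
    by (simp only: zk_def prod_linear_roots_unity[OF n w] P_def c_def)
      (simp add: map_poly_pCons map_poly_cnj_power map_poly_cnj_diff)
  also have "\<dots> = P * map_poly cnj P - (smult (cnj c) P + map_poly cnj (smult (cnj c) P))
      + [:c * cnj c:]"
    by (simp add: map_poly_cnj_smult algebra_simps)
  also have "\<dots> = map_poly of_real (quad_poly z ^ n - smult 2 (map_poly Re (smult (cnj w ^ n) P))
      + [:cmod w ^ (2 * n):])"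
  proof -
    have "map_poly of_real (quad_poly z ^ n) = P * map_poly cnj P"
      by (simp only: map_poly_of_real_power map_poly_of_real_quad_poly power_mult_distrib
          P_def cnj_P[unfolded P_def])
    moreover have "map_poly of_real (smult 2 (map_poly Re (smult (cnj w ^ n) P)))
        = smult (cnj c) P + map_poly cnj (smult (cnj c) P)"
      using map_poly_of_real_Re[of "smult (cnj c) P"] by (simp add: map_poly_of_real_smult c_def)
    moreover have "map_poly of_real [:cmod w ^ (2 * n):] = [:c * cnj c:]"
      using complex_norm_square[of c]
      by (simp add: c_def norm_power power_mult mult.commute map_poly_pCons)
    ultimately show ?thesis
      by (simp only: map_poly_of_real_add map_poly_of_real_diff)
  qed
  finally show "map_poly complex_of_real (\<Prod>k<n. quad_poly (z + w * cis (2 * pi * real k / real n))) =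
    map_poly complex_of_real (quad_poly z ^ n - smult 2 (map_poly Re (smult (cnj w ^ n) ([:-z, 1:] ^ n)))
      + [:cmod w ^ (2 * n):])"
    by (simp add: P_def c_def zk_def)
qed

definition quad_norm :: "'a::real_normed_field \<Rightarrow> complex \<Rightarrow> real" where
  "quad_norm x z = norm (poly (map_poly of_real (quad_poly z)) x)"

lemma continuous_on_quad_norm: "continuous_on UNIV (quad_norm x)"
  unfolding quad_norm_def poly_quad_poly by (intro continuous_intros)

lemma quad_norm_zero: "quad_norm x 0 = (norm x)\<^sup>2"
  by (simp add: quad_norm_def poly_quad_poly norm_mult power2_eq_square)

lemma prod_quad_norm_roots_unity_le:
  fixes x :: "'a::real_normed_field"
  assumes n: "n > 0" and w: "w \<noteq> 0"
  shows "(\<Prod>k<n. quad_norm x (z + w * cis (2 * pi * real k / real n)))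
    \<le> quad_norm x z ^ n + 2 * (cmod w * (norm x + cmod z)) ^ n + (cmod w ^ 2) ^ n"
proof -
  define ev :: "real poly \<Rightarrow> 'a" where "ev p = poly (map_poly of_real p) x" for p
  define R where "R = map_poly Re (smult (cnj w ^ n) ([:-z, 1:] ^ n))"
  have "norm (ev R) \<le> poly (map_poly cmod (smult (cnj w ^ n) ([:-z, 1:] ^ n))) (norm x)"
    unfolding ev_def R_def by (rule norm_poly_map_poly_Re_le)
  also have "\<dots> = (cmod w * (norm x + cmod z)) ^ n"
    by (simp add: map_poly_cmod_smult map_poly_cmod_linear_power norm_power poly_power
        power_mult_distrib add.commute)
  finally have R_le: "norm (ev R) \<le> (cmod w * (norm x + cmod z)) ^ n" .
  have "(\<Prod>k<n. quad_norm x (z + w * cis (2 * pi * real k / real n)))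
      = norm (ev (\<Prod>k<n. quad_poly (z + w * cis (2 * pi * real k / real n))))"
    by (simp add: quad_norm_def ev_def map_poly_of_real_prod poly_prod prod_norm)
  also have "\<dots> = norm (ev (quad_poly z) ^ n - 2 * ev R + of_real (cmod w ^ (2 * n)))"
    by (simp add: prod_quad_poly_roots_unity[OF n w] ev_def R_def map_poly_of_real_add
        map_poly_of_real_diff map_poly_of_real_power map_poly_of_real_smult map_poly_pCons)
  also have "\<dots> \<le> norm (ev (quad_poly z) ^ n) + norm (2 * ev R) + norm (of_real (cmod w ^ (2 * n)) :: 'a)"
    by (rule order_trans[OF norm_triangle_ineq], rule add_right_mono, rule norm_triangle_ineq4)
  also have "\<dots> \<le> quad_norm x z ^ n + 2 * (cmod w * (norm x + cmod z)) ^ n + (cmod w ^ 2) ^ n"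
    using R_le by (simp add: quad_norm_def ev_def norm_power norm_mult power_mult)
  finally show ?thesis .
qed

lemma quad_norm_coercive:
  fixes x :: "'a::real_normed_field"
  assumes z: "cmod z > 3 * norm x + 1"
  shows "quad_norm x 0 < quad_norm x z"
proof -
  have "(cmod z)\<^sup>2 = norm (of_real ((cmod z)\<^sup>2) :: 'a)"
    by (simp only: norm_of_real) simp
  also have "\<dots> \<le> quad_norm x z + norm (x * x) + norm (of_real (2 * Re z) * x)"
  proof -
    have "(of_real ((cmod z)\<^sup>2) :: 'a)
        = poly (map_poly of_real (quad_poly z)) x - x * x + of_real (2 * Re z) * x"
      by (simp add: poly_quad_poly)
    then show ?thesis
      unfolding quad_norm_def
      by (metis norm_triangle_ineq4 norm_triangle_le add_mono order_refl)
  qed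
  also have "norm (of_real (2 * Re z) * x) \<le> 2 * cmod z * norm x"
    by (simp add: norm_mult abs_Re_le_cmod mult_right_mono)
  finally have "(cmod z)\<^sup>2 \<le> quad_norm x z + (norm x)\<^sup>2 + 2 * cmod z * norm x"
    by (simp add: norm_mult power2_eq_square)
  moreover have "(cmod z)\<^sup>2 > 2 * (norm x)\<^sup>2 + 2 * cmod z * norm x"
  proof -
    have "cmod z > 0"
      using z by (smt (verit) norm_ge_zero)
    then have "cmod z * (cmod z - 2 * norm x) > cmod z * (norm x + 1)"
      using z by (intro mult_strict_left_mono) auto
    moreover have "cmod z * (norm x + 1) \<ge> (3 * norm x + 1) * (norm x + 1)"
      using z by (intro mult_right_mono) auto
    moreover have "(3 * norm x + 1) * (norm x + 1) > 2 * (norm x)\<^sup>2"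
      by (simp add: power2_eq_square algebra_simps) (smt (verit) norm_ge_zero mult_nonneg_nonneg)
    ultimately show ?thesis by (simp add: power2_eq_square algebra_simps)
  qed
  ultimately show ?thesis
    by (simp add: quad_norm_zero)
qed

lemma exists_minimizer_of_max_norm:
  fixes f :: "'a::euclidean_space \<Rightarrow> real"
  assumes cont: "continuous_on UNIV f" and coercive: "\<And>z. R < norm z \<Longrightarrow> f 0 < f z"
  obtains z0 where "\<And>z. f z0 \<le> f z" "\<And>z. f z = f z0 \<Longrightarrow> norm z \<le> norm z0"
proof -
  have "R \<ge> 0"
    using coercive[of 0] by (cases "R \<ge> 0") auto
  then have "cball 0 R \<noteq> {}"
    by simp
  then obtain zs where zs: "zs \<in> cball 0 R" "\<And>z. z \<in> cball 0 R \<Longrightarrow> f zs \<le> f z"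
    using continuous_attains_inf[OF compact_cball _ continuous_on_subset[OF cont subset_UNIV]] by blast
  have "f zs \<le> f 0"
    using zs(2) \<open>R \<ge> 0\<close> by simp
  then have outside: "f zs < f z" if "z \<notin> cball 0 R" for z
    using coercive[of z] that by simp
  have min: "f zs \<le> f z" for z
    using zs(2)[of z] outside[of z] by fastforce
  define S where "S = {z. f z = f zs}"
  have "S \<subseteq> cball 0 R"
    using outside by (force simp: S_def)
  moreover have "closed S"
    unfolding S_def using continuous_closed_preimage_constant[OF cont closed_UNIV] by simp
  ultimately have "compact S"
    using bounded_subset[OF bounded_cball] compact_eq_bounded_closed by blast
  moreover have "S \<noteq> {}"
    by (auto simp: S_def)
  ultimately obtain z0 where "z0 \<in> S" "\<And>z. z \<in> S \<Longrightarrow> norm z \<le> norm z0"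
    using continuous_attains_sup[of S norm] continuous_on_norm_id by blast
  then show ?thesis
    using min by (intro that[of z0]) (auto simp: S_def)
qed

lemma le_of_power_bound:
  fixes A m a b :: real
  assumes m: "0 < m" and a: "0 \<le> a" "a < m" and b: "0 \<le> b" "b < m"
    and bound: "\<And>n. n > 0 \<Longrightarrow> A * m ^ (n - 1) \<le> m ^ n + 2 * a ^ n + b ^ n"
  shows "A \<le> m"
proof (rule ccontr)
  assume "\<not> A \<le> m"
  then have "A / m - 1 > 0"
    using m by (simp add: field_simps)
  moreover have "(\<lambda>n. 2 * (a / m) ^ n + (b / m) ^ n) \<longlonglongrightarrow> 2 * 0 + 0"
    using m a b by (intro tendsto_intros LIMSEQ_power_zero) auto
  ultimately have "eventually (\<lambda>n. 2 * (a / m) ^ n + (b / m) ^ n < A / m - 1) sequentially"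
    by (simp add: order_tendstoD(2))
  then have "eventually (\<lambda>n. 2 * (a / m) ^ n + (b / m) ^ n < A / m - 1 \<and> n > 0) sequentially"
    by (intro eventually_conj eventually_gt_at_top)
  then obtain n where n: "n > 0" "2 * (a / m) ^ n + (b / m) ^ n < A / m - 1"
    by (auto simp: eventually_sequentially)
  have "A / m = A * m ^ (n - 1) / m ^ n"
    using n(1) m by (cases n) (auto simp: field_simps)
  also have "\<dots> \<le> (m ^ n + 2 * a ^ n + b ^ n) / m ^ n"
    using bound[OF n(1)] m by (intro divide_right_mono) auto
  also have "\<dots> = 1 + 2 * (a / m) ^ n + (b / m) ^ n"
    using m by (simp add: field_simps power_divide)
  finally show False
    using n(2) by simp
qed

lemma quad_norm_shift_le:
  fixes x :: "'a::real_normed_field"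
  assumes min: "\<And>z. quad_norm x z0 \<le> quad_norm x z" and m: "quad_norm x z0 > 0"
    and w: "w \<noteq> 0" "cmod w * (norm x + cmod z0) < quad_norm x z0" "(cmod w)\<^sup>2 < quad_norm x z0"
  shows "quad_norm x (z0 + w) \<le> quad_norm x z0"
proof (rule le_of_power_bound[OF m _ w(2) _ w(3)])
  fix n :: nat assume n: "n > 0"
  define m where "m = quad_norm x z0"
  define zk where "zk k = z0 + w * cis (2 * pi * real k / real n)" for k
  have "quad_norm x (z0 + w) * m ^ (n - 1) \<le> quad_norm x (zk 0) * (\<Prod>k<n - 1. quad_norm x (zk (Suc k)))"
  proof (rule mult_mono)
    have "m ^ (n - 1) = (\<Prod>k<n - 1. m)"
      by simp
    also have "\<dots> \<le> (\<Prod>k<n - 1. quad_norm x (zk (Suc k)))"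
      using m min by (intro prod_mono) (auto simp: m_def less_imp_le)
    finally show "m ^ (n - 1) \<le> (\<Prod>k<n - 1. quad_norm x (zk (Suc k)))" .
  qed (use m in \<open>auto simp: zk_def m_def quad_norm_def\<close>)
  also have "\<dots> = (\<Prod>k<n. quad_norm x (zk k))"
    using n by (cases n) (simp_all only: prod.lessThan_Suc_shift diff_Suc_1)
  also have "\<dots> \<le> m ^ n + 2 * (cmod w * (norm x + cmod z0)) ^ n + ((cmod w)\<^sup>2) ^ n"
    using prod_quad_norm_roots_unity_le[OF n w(1), of x z0] by (simp add: zk_def m_def)
  finally show "quad_norm x (z0 + w) * quad_norm x z0 ^ (n - 1)
      \<le> quad_norm x z0 ^ n + 2 * (cmod w * (norm x + cmod z0)) ^ n + ((cmod w)\<^sup>2) ^ n"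
    by (simp add: m_def)
qed simp_all

lemma exists_small_pos:
  fixes C m :: real
  assumes "m > 0"
  obtains \<delta> where "\<delta> > 0" "\<delta> * C < m" "\<delta>\<^sup>2 < m"
proof -
  have "\<forall>\<^sub>F \<delta> in at_right 0. \<delta> * C < m \<and> \<delta>\<^sup>2 < m"
    using assms by (intro eventually_conj order_tendstoD(2)) (auto intro!: tendsto_eq_intros)
  then obtain b where b: "b > 0" "\<And>\<delta>. 0 < \<delta> \<Longrightarrow> \<delta> < b \<Longrightarrow> \<delta> * C < m \<and> \<delta>\<^sup>2 < m"
    unfolding eventually_at_right_field by auto
  show ?thesis
    using b(2)[of "b / 2"] b(1) by (intro that[of "b / 2"]) auto
qed

theorem exists_quad_poly_root:
  fixes x :: "'a::real_normed_field"
  shows "\<exists>z. poly (map_poly of_real (quad_poly z)) x = 0"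
proof (rule ccontr)
  assume "\<not> ?thesis"
  then have pos: "quad_norm x z > 0" for z
    by (simp add: quad_norm_def)
  obtain z0 where min: "\<And>z. quad_norm x z0 \<le> quad_norm x z"
    and max_norm: "\<And>z. quad_norm x z = quad_norm x z0 \<Longrightarrow> cmod z \<le> cmod z0"
    using exists_minimizer_of_max_norm[OF continuous_on_quad_norm quad_norm_coercive] by blast
  obtain \<delta> where \<delta>: "\<delta> > 0" "\<delta> * (norm x + cmod z0) < quad_norm x z0" "\<delta>\<^sup>2 < quad_norm x z0"
    using exists_small_pos[OF pos] by blast
  define w where "w = complex_of_real \<delta> * (if z0 = 0 then 1 else sgn z0)"
  have cmod_w: "cmod w = \<delta>"
    using \<delta> by (simp add: w_def norm_mult norm_sgn)
  have "cmod (z0 + w) = cmod z0 + \<delta>"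
  proof (cases "z0 = 0")
    case False
    then have "z0 + w = complex_of_real (cmod z0 + \<delta>) * sgn z0"
      by (simp add: w_def sgn_div_norm algebra_simps of_real_def)
    then show ?thesis
      using False \<delta> by (simp only: norm_mult norm_sgn norm_of_real) simp
  qed (simp add: cmod_w)
  moreover have "w \<noteq> 0"
    using cmod_w \<delta> by auto
  then have "quad_norm x (z0 + w) \<le> quad_norm x z0"
    using \<delta> by (intro quad_norm_shift_le[OF min pos]) (simp_all add: cmod_w)
  then have "cmod (z0 + w) \<le> cmod z0"
    using min[of "z0 + w"] by (intro max_norm) simp
  ultimately show False
    using \<delta> by simp
qed

lemma real_normed_field_cases:
  fixes c :: "'a::real_normed_field"
  obtains a where "c = of_real a"
  | a b j where "j * j = -1" "c = of_real a + of_real b * j"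
proof -
  obtain z where "poly (map_poly of_real (quad_poly z)) c = 0"
    using exists_quad_poly_root by blast
  moreover have "poly (map_poly of_real (quad_poly z)) c
      = (c - of_real (Re z)) * (c - of_real (Re z)) + of_real ((Im z)\<^sup>2)"
    unfolding poly_quad_poly cmod_power2 by (simp add: algebra_simps power2_eq_square)
  ultimately have sq: "(c - of_real (Re z)) * (c - of_real (Re z)) = - of_real ((Im z)\<^sup>2)"
    by (simp add: eq_neg_iff_add_eq_0)
  show ?thesis
  proof (cases "Im z = 0")
    case True
    then show ?thesis
      using sq that(1)[of "Re z"] by simp
  next
    case False
    define j where "j = (c - of_real (Re z)) / of_real (Im z)"
    have "j * j = -1"
      using False by (simp add: j_def sq power2_eq_square)
    moreover have "c = of_real (Re z) + of_real (Im z) * j"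
      using False by (simp add: j_def)
    ultimately show ?thesis
      by (rule that(2))
  qed
qed

lemma imag_unit_span:
  fixes c i :: "'a::real_normed_field"
  assumes i: "i * i = -1"
  obtains a b where "c = of_real a + of_real b * i"
proof (cases c rule: real_normed_field_cases)
  case (1 a)
  then show ?thesis
    using that[of a 0] by simp
next
  case (2 a b j)
  have "(j - i) * (j + i) = 0"
    using 2(1) i by (simp add: algebra_simps)
  then have "j = i \<or> j = - i"
    by (simp add: eq_neg_iff_add_eq_0)
  then show ?thesis
    using 2(2) that[of a b] that[of a "-b"] by auto
qed

lemma of_real_if_no_imag_unit:
  fixes c :: "'a::real_normed_field"
  assumes "\<nexists>i::'a. i * i = -1"
  obtains a where "c = of_real a"
  using assms by (cases c rule: real_normed_field_cases) auto

lemma imag_unit_not_real: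
  fixes i :: "'a::real_normed_field"
  assumes "i * i = -1"
  shows "i \<noteq> of_real r"
proof
  assume "i = of_real r"
  then have "of_real (r * r) = (of_real (-1) :: 'a)"
    using assms by simp
  then have "r * r = -1"
    by (simp only: of_real_eq_iff)
  then show False
    by (smt (verit) zero_le_square)
qed

lemma norm_imag_unit:
  fixes i :: "'a::real_normed_field"
  assumes "i * i = -1"
  shows "norm i = 1"
proof -
  have "norm i * norm i = 1"
    using assms by (metis norm_minus_cancel norm_mult norm_one)
  then have "(norm i - 1) * (norm i + 1) = 0"
    by (simp add: algebra_simps)
  then show ?thesis
    using norm_ge_zero[of i] by simp
qed

lemma norm_le_one_if_power_bounded:
  fixes t :: "'a::real_normed_div_algebra"
  assumes "\<And>n. norm (t ^ n) \<le> B"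
  shows "norm t \<le> 1"
proof (rule ccontr)
  assume "\<not> norm t \<le> 1"
  then obtain n where "B < norm t ^ n"
    using real_arch_pow by fastforce
  then show False
    using assms[of n] by (simp add: norm_power)
qed

lemma imag_unit_de_Moivre:
  fixes i :: "'a::real_normed_field"
  assumes i: "i * i = -1"
  shows "(of_real (cos t) + of_real (sin t) * i) ^ n = of_real (cos (n * t)) + of_real (sin (n * t)) * i"
proof (induction n)
  case (Suc n)
  have ii: "i * (i * x) = - x" for x
    using i by (metis mult.assoc mult_minus1)
  have "real (Suc n) * t = real n * t + t"
    by (simp add: algebra_simps)
  then show ?case
    using Suc.IH by (simp add: cos_add sin_add algebra_simps ii)
qed simp

lemma norm_imag_unit_cis:
  fixes i :: "'a::real_normed_field"
  assumes i: "i * i = -1"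
  shows "norm (of_real (cos t) + of_real (sin t) * i) = 1"
proof -
  define u where "u s = of_real (cos s) + of_real (sin s) * i" for s
  have "norm (u s ^ n) \<le> 2" for s n
  proof -
    have "norm (u s ^ n) \<le> \<bar>cos (n * s)\<bar> + \<bar>sin (n * s)\<bar>"
      using norm_triangle_ineq[of "of_real (cos (n * s))" "of_real (sin (n * s)) * i"]
      by (simp add: u_def imag_unit_de_Moivre[OF i] norm_mult norm_imag_unit[OF i])
    then show ?thesis
      using abs_cos_le_one[of "n * s"] abs_sin_le_one[of "n * s"] by linarith
  qed
  then have le1: "norm (u s) \<le> 1" for s
    by (rule norm_le_one_if_power_bounded)
  have ii: "i * (i * x) = - x" for x
    using i by (metis mult.assoc mult_minus1)
  have "of_real (cos t) * of_real (cos t) + of_real (sin t) * of_real (sin t) = (1 :: 'a)"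
    by (metis of_real_1 of_real_add of_real_mult sin_cos_squared_add3)
  then have "u t * u (- t) = 1"
    by (simp add: u_def algebra_simps ii)
  then have "norm (u t) * norm (u (- t)) = 1"
    by (metis norm_mult norm_one)
  then show ?thesis
    using le1[of t] le1[of "- t"] unfolding u_def[symmetric]
    by (smt (verit) mult_left_le norm_ge_zero)
qed

lemma norm_of_real_add_imag_unit:
  fixes i :: "'a::real_normed_field"
  assumes i: "i * i = -1"
  shows "norm (of_real a + of_real b * i) = sqrt (a\<^sup>2 + b\<^sup>2)"
proof (cases "Complex a b = 0")
  case False
  define r c s where "r = cmod (Complex a b)" and "c = cos (Arg (Complex a b))"
    and "s = sin (Arg (Complex a b))"
  have "a = r * c" "b = r * s"
    using False by (simp_all add: r_def c_def s_def cos_Arg sin_Arg)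
  then have "of_real a + of_real b * i = of_real r * (of_real c + of_real s * i)"
    by (simp add: algebra_simps)
  then show ?thesis
    by (simp add: norm_mult norm_imag_unit_cis[OF i] r_def c_def s_def cmod_def)
qed (simp add: complex_eq_iff)

section \<open>Hahn-Banach theorem for real normed spaces\<close>

definition norm_dominated_graph :: "'a::real_normed_vector \<Rightarrow> ('a \<times> real) set \<Rightarrow> bool" where
  "norm_dominated_graph p G \<longleftrightarrow>
     (0, 0) \<in> G \<and> (p, norm p) \<in> G \<and>
     (\<forall>x s y t. (x, s) \<in> G \<longrightarrow> (y, t) \<in> G \<longrightarrow> (x + y, s + t) \<in> G) \<and>
     (\<forall>x s c. (x, s) \<in> G \<longrightarrow> (c *\<^sub>R x, c * s) \<in> G) \<and>
     (\<forall>x s t. (x, s) \<in> G \<longrightarrow> (x, t) \<in> G \<longrightarrow> s = t) \<and>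
     (\<forall>x s. (x, s) \<in> G \<longrightarrow> s \<le> norm x)"

lemma norm_dominated_graphD:
  assumes "norm_dominated_graph p G"
  shows "(0, 0) \<in> G" "(p, norm p) \<in> G"
    "\<And>x s y t. (x, s) \<in> G \<Longrightarrow> (y, t) \<in> G \<Longrightarrow> (x + y, s + t) \<in> G"
    "\<And>x s c. (x, s) \<in> G \<Longrightarrow> (c *\<^sub>R x, c * s) \<in> G"
    "\<And>x s t. (x, s) \<in> G \<Longrightarrow> (x, t) \<in> G \<Longrightarrow> s = t"
    "\<And>x s. (x, s) \<in> G \<Longrightarrow> s \<le> norm x"
  using assms unfolding norm_dominated_graph_def by blast+

lemma norm_dominated_graph_line:
  fixes p :: "'a::real_normed_vector"
  assumes p: "p \<noteq> 0"
  shows "norm_dominated_graph p {(c *\<^sub>R p, c * norm p) | c. True}"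
  unfolding norm_dominated_graph_def
proof (intro conjI allI impI)
  show "(0, 0) \<in> {(c *\<^sub>R p, c * norm p) | c. True}"
    by (metis (mono_tags, lifting) mem_Collect_eq mult_zero_left scaleR_zero_left)
  show "(p, norm p) \<in> {(c *\<^sub>R p, c * norm p) | c. True}"
    by (metis (mono_tags, lifting) mem_Collect_eq mult_1 scaleR_one)
next
  fix x s y t
  assume "(x, s) \<in> {(c *\<^sub>R p, c * norm p) | c. True}" "(y, t) \<in> {(c *\<^sub>R p, c * norm p) | c. True}"
  then obtain c1 c2 where "x = c1 *\<^sub>R p" "s = c1 * norm p" "y = c2 *\<^sub>R p" "t = c2 * norm p"
    by blast
  then have "x + y = (c1 + c2) *\<^sub>R p" "s + t = (c1 + c2) * norm p"
    by (simp_all add: algebra_simps scaleR_add_left)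
  then show "(x + y, s + t) \<in> {(c *\<^sub>R p, c * norm p) | c. True}"
    by blast
next
  fix x s d
  assume "(x, s) \<in> {(c *\<^sub>R p, c * norm p) | c. True}"
  then obtain c where "x = c *\<^sub>R p" "s = c * norm p"
    by blast
  then have "d *\<^sub>R x = (d * c) *\<^sub>R p" "d * s = (d * c) * norm p"
    by simp_all
  then show "(d *\<^sub>R x, d * s) \<in> {(c *\<^sub>R p, c * norm p) | c. True}"
    by blast
next
  fix x s t
  assume "(x, s) \<in> {(c *\<^sub>R p, c * norm p) | c. True}" "(x, t) \<in> {(c *\<^sub>R p, c * norm p) | c. True}"
  then obtain c1 c2 where "x = c1 *\<^sub>R p" "s = c1 * norm p" "x = c2 *\<^sub>R p" "t = c2 * norm p"
    by blast
  then show "s = t"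
    using p by (simp add: scaleR_cancel_right)
next
  fix x s
  assume "(x, s) \<in> {(c *\<^sub>R p, c * norm p) | c. True}"
  then obtain c where "x = c *\<^sub>R p" "s = c * norm p"
    by blast
  then show "s \<le> norm x"
    by (simp add: mult_right_mono)
qed

lemma norm_dominated_graph_Union:
  assumes ne: "\<C> \<noteq> {}" and chain: "subset.chain {G. norm_dominated_graph p G} \<C>"
  shows "norm_dominated_graph p (\<Union>\<C>)"
proof -
  have good: "\<And>G. G \<in> \<C> \<Longrightarrow> norm_dominated_graph p G"
    and comparable: "\<And>G H. G \<in> \<C> \<Longrightarrow> H \<in> \<C> \<Longrightarrow> G \<subseteq> H \<or> H \<subseteq> G"
    using chain unfolding subset_chain_def by blast+
  obtain G0 where G0: "G0 \<in> \<C>"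
    using ne by blast
  show ?thesis
    unfolding norm_dominated_graph_def
  proof (intro conjI allI impI)
    show "(0, 0) \<in> \<Union>\<C>" "(p, norm p) \<in> \<Union>\<C>"
      using norm_dominated_graphD(1,2)[OF good[OF G0]] G0 by blast+
  next
    fix x s y t assume "(x, s) \<in> \<Union>\<C>" "(y, t) \<in> \<Union>\<C>"
    then obtain G H where "G \<in> \<C>" "H \<in> \<C>" "(x, s) \<in> G" "(y, t) \<in> H"
      by blast
    then show "(x + y, s + t) \<in> \<Union>\<C>"
      using comparable[of G H] norm_dominated_graphD(3)[OF good] by blast
  next
    fix x s d assume "(x, s) \<in> \<Union>\<C>"
    then show "(d *\<^sub>R x, d * s) \<in> \<Union>\<C>"
      using norm_dominated_graphD(4)[OF good] by blast
  next
    fix x s t assume "(x, s) \<in> \<Union>\<C>" "(x, t) \<in> \<Union>\<C>"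
    then obtain G H where "G \<in> \<C>" "H \<in> \<C>" "(x, s) \<in> G" "(x, t) \<in> H"
      by blast
    then show "s = t"
      using comparable[of G H] norm_dominated_graphD(5)[OF good] by blast
  next
    fix x s assume "(x, s) \<in> \<Union>\<C>"
    then show "s \<le> norm x"
      using norm_dominated_graphD(6)[OF good] by blast
  qed
qed

lemma norm_dominated_extension_bound:
  fixes z :: "'a::real_normed_vector"
  assumes scale: "\<And>x s r. (x, s) \<in> G \<Longrightarrow> (r *\<^sub>R x, r * s) \<in> G"
    and below: "\<And>x s. (x, s) \<in> G \<Longrightarrow> s - norm (x - z) \<le> c"
    and above: "\<And>y t. (y, t) \<in> G \<Longrightarrow> c \<le> norm (y + z) - t"
    and bound: "\<And>x s. (x, s) \<in> G \<Longrightarrow> s \<le> norm x"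
    and xs: "(x, s) \<in> G"
  shows "s + a * c \<le> norm (x + a *\<^sub>R z)"
proof (cases a "0::real" rule: linorder_cases)
  case equal
  then show ?thesis
    using bound[OF xs] by simp
next
  case greater
  have "c \<le> norm ((1 / a) *\<^sub>R x + z) - (1 / a) * s"
    using above[OF scale[OF xs]] .
  then have "a * c \<le> a * (norm ((1 / a) *\<^sub>R x + z) - (1 / a) * s)"
    using greater by (intro mult_left_mono) auto
  also have "\<dots> = a * norm ((1 / a) *\<^sub>R x + z) - s"
    using greater by (simp add: right_diff_distrib)
  also have "a * norm ((1 / a) *\<^sub>R x + z) = norm (a *\<^sub>R ((1 / a) *\<^sub>R x + z))"
    using greater by simp
  also have "a *\<^sub>R ((1 / a) *\<^sub>R x + z) = x + a *\<^sub>R z"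
    using greater by (simp add: scaleR_add_right)
  finally show ?thesis
    by simp
next
  case less
  define b where "b = - a"
  have b: "b > 0"
    using less by (simp add: b_def)
  have "(1 / b) * s - norm ((1 / b) *\<^sub>R x - z) \<le> c"
    using below[OF scale[OF xs]] .
  then have "b * ((1 / b) * s - norm ((1 / b) *\<^sub>R x - z)) \<le> b * c"
    using b by (intro mult_left_mono) auto
  moreover have "b * ((1 / b) * s - norm ((1 / b) *\<^sub>R x - z)) = s - norm (b *\<^sub>R ((1 / b) *\<^sub>R x - z))"
    using b by (simp add: right_diff_distrib)
  moreover have "b *\<^sub>R ((1 / b) *\<^sub>R x - z) = x + a *\<^sub>R z"
    using b by (simp add: scaleR_diff_right b_def)
  ultimately have "s - norm (x + a *\<^sub>R z) \<le> b * c"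
    by metis
  then show ?thesis
    by (simp add: b_def)
qed

lemma norm_dominated_graph_separation:
  fixes z :: "'a::real_normed_vector"
  assumes G: "norm_dominated_graph p G"
  obtains c where "\<And>x s. (x, s) \<in> G \<Longrightarrow> s - norm (x - z) \<le> c"
    "\<And>y t. (y, t) \<in> G \<Longrightarrow> c \<le> norm (y + z) - t"
proof -
  define A where "A = {s - norm (x - z) | x s. (x, s) \<in> G}"
  have sep: "s - norm (x - z) \<le> norm (y + z) - t" if "(x, s) \<in> G" "(y, t) \<in> G" for x s y t
  proof -
    have "s + t \<le> norm ((x - z) + (y + z))"
      using norm_dominated_graphD(6)[OF G norm_dominated_graphD(3)[OF G that]] by simp
    also have "\<dots> \<le> norm (x - z) + norm (y + z)"
      by (rule norm_triangle_ineq)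
    finally show ?thesis
      by simp
  qed
  have A: "A \<noteq> {}" "bdd_above A"
    using norm_dominated_graphD(1)[OF G] sep[OF _ norm_dominated_graphD(1)[OF G]]
    unfolding A_def bdd_above_def by force+
  show ?thesis
  proof (rule that[of "Sup A"])
    show "s - norm (x - z) \<le> Sup A" if "(x, s) \<in> G" for x s
      using that A(2) by (intro cSup_upper) (auto simp: A_def)
    show "Sup A \<le> norm (y + z) - t" if "(y, t) \<in> G" for y t
      using that A(1) sep by (intro cSup_least) (auto simp: A_def)
  qed
qed

lemma norm_dominated_graph_adjoin:
  fixes p :: "'a::real_normed_vector"
  assumes G: "norm_dominated_graph p G" and z: "\<forall>s. (z, s) \<notin> G"
    and below: "\<And>x s. (x, s) \<in> G \<Longrightarrow> s - norm (x - z) \<le> c"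
    and above: "\<And>y t. (y, t) \<in> G \<Longrightarrow> c \<le> norm (y + z) - t"
  shows "norm_dominated_graph p {(x + a *\<^sub>R z, s + a * c) | x s a. (x, s) \<in> G}"
    (is "norm_dominated_graph p ?G'")
proof -
  note G_zero = norm_dominated_graphD(1)[OF G]
    and G_add = norm_dominated_graphD(3)[OF G] and G_scale = norm_dominated_graphD(4)[OF G]
  show ?thesis
    unfolding norm_dominated_graph_def
  proof (intro conjI allI impI)
    show "(0, 0) \<in> ?G'" "(p, norm p) \<in> ?G'"
      using G_zero norm_dominated_graphD(2)[OF G]
      by (metis (mono_tags, lifting) add_0_right mem_Collect_eq mult_zero_left scaleR_zero_left)+
  next
    fix x s y t assume "(x, s) \<in> ?G'" "(y, t) \<in> ?G'"
    then obtain x1 s1 a1 x2 s2 a2 where "(x1, s1) \<in> G" "(x2, s2) \<in> G"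
      "x = x1 + a1 *\<^sub>R z" "s = s1 + a1 * c" "y = x2 + a2 *\<^sub>R z" "t = s2 + a2 * c"
      by blast
    then have "(x1 + x2, s1 + s2) \<in> G" "x + y = (x1 + x2) + (a1 + a2) *\<^sub>R z"
      "s + t = (s1 + s2) + (a1 + a2) * c"
      using G_add by (simp_all add: algebra_simps scaleR_add_left)
    then show "(x + y, s + t) \<in> ?G'"
      by blast
  next
    fix x s d assume "(x, s) \<in> ?G'"
    then obtain x1 s1 a1 where "(x1, s1) \<in> G" "x = x1 + a1 *\<^sub>R z" "s = s1 + a1 * c"
      by blast
    then have "(d *\<^sub>R x1, d * s1) \<in> G" "d *\<^sub>R x = d *\<^sub>R x1 + (d * a1) *\<^sub>R z"
      "d * s = d * s1 + (d * a1) * c"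
      using G_scale[of x1 s1 d] by (simp_all add: algebra_simps scaleR_add_right)
    then show "(d *\<^sub>R x, d * s) \<in> ?G'"
      by blast
  next
    fix x s t assume "(x, s) \<in> ?G'" "(x, t) \<in> ?G'"
    then obtain x1 s1 a1 x2 s2 a2 where h: "(x1, s1) \<in> G" "(x2, s2) \<in> G"
      "x = x1 + a1 *\<^sub>R z" "s = s1 + a1 * c" "x = x2 + a2 *\<^sub>R z" "t = s2 + a2 * c"
      by blast
    show "s = t"
    proof (cases "a1 = a2")
      case True
      then show ?thesis
        using h norm_dominated_graphD(5)[OF G] by simp
    next
      case False
      \<comment> \<open>otherwise \<open>z\<close> itself would lie in the domain of \<open>G\<close>\<close>
      have "((1 / (a1 - a2)) *\<^sub>R (x2 + (-1) *\<^sub>R x1), (1 / (a1 - a2)) * (s2 + (-1) * s1)) \<in> G"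
        using G_scale[OF G_add[OF h(2) G_scale[OF h(1)]]] .
      moreover have "x2 - x1 = (a1 - a2) *\<^sub>R z"
        using h by (simp add: algebra_simps)
      then have "(1 / (a1 - a2)) *\<^sub>R (x2 + (-1) *\<^sub>R x1) = z"
        using False by simp
      ultimately show ?thesis
        using z by simp
    qed
  next
    fix x s assume "(x, s) \<in> ?G'"
    then show "s \<le> norm x"
      using norm_dominated_extension_bound[OF G_scale below above norm_dominated_graphD(6)[OF G]]
      by blast
  qed
qed

lemma norm_dominated_graph_extend:
  fixes p :: "'a::real_normed_vector"
  assumes G: "norm_dominated_graph p G" and z: "\<forall>s. (z, s) \<notin> G"
  shows "\<exists>G'. norm_dominated_graph p G' \<and> G \<subset> G'"
proof -
  obtain c where below: "\<And>x s. (x, s) \<in> G \<Longrightarrow> s - norm (x - z) \<le> c"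
    and above: "\<And>y t. (y, t) \<in> G \<Longrightarrow> c \<le> norm (y + z) - t"
    using norm_dominated_graph_separation[OF G] by blast
  define G' where "G' = {(x + a *\<^sub>R z, s + a * c) | x s a. (x, s) \<in> G}"
  have "G \<subseteq> G'"
    unfolding G'_def by force
  moreover have "(z, c) \<in> G'"
    unfolding G'_def using norm_dominated_graphD(1)[OF G] by force
  ultimately show ?thesis
    using norm_dominated_graph_adjoin[OF G z below above] z unfolding G'_def by blast
qed

theorem real_Hahn_Banach_norming:
  fixes p :: "'a::real_normed_vector"
  assumes p: "p \<noteq> 0"
  obtains g where "bounded_linear g" "g p = norm p" "\<And>x. \<bar>g x\<bar> \<le> norm x"
proof -
  define \<A> where "\<A> = {G. norm_dominated_graph p G}"
  have "{(c *\<^sub>R p, c * norm p) | c. True} \<in> \<A>"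
    using norm_dominated_graph_line[OF p] by (simp add: \<A>_def)
  then obtain M where M: "M \<in> \<A>" "\<And>G. G \<in> \<A> \<Longrightarrow> M \<subseteq> G \<Longrightarrow> G = M"
    using subset_Zorn_nonempty[of \<A>] norm_dominated_graph_Union unfolding \<A>_def by blast
  then have good: "norm_dominated_graph p M"
    by (simp add: \<A>_def)
  have total: "\<exists>s. (x, s) \<in> M" for x
    using norm_dominated_graph_extend[OF good] M(2) unfolding \<A>_def by blast
  define g where "g x = (THE s. (x, s) \<in> M)" for x
  have g_eq: "g x = s" if "(x, s) \<in> M" for x s
    unfolding g_def using that norm_dominated_graphD(5)[OF good] by blast
  have g_in: "(x, g x) \<in> M" for x
    using total g_eq by blast
  have lin: "linear g"
  proof
    show "g (x + y) = g x + g y" for x y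
      using g_eq[OF norm_dominated_graphD(3)[OF good g_in g_in]] .
    show "g (r *\<^sub>R x) = r *\<^sub>R g x" for r x
      using g_eq[OF norm_dominated_graphD(4)[OF good g_in]] by simp
  qed
  have bound: "\<bar>g x\<bar> \<le> norm x" for x
    using norm_dominated_graphD(6)[OF good g_in, of x] norm_dominated_graphD(6)[OF good g_in, of "- x"]
      linear_neg[OF lin, of x] by simp
  have "bounded_linear g"
    using lin bound by (intro bounded_linear_intro[where K = 1]) (auto simp: linear_add linear_scale)
  moreover have "g p = norm p"
    using g_eq[OF norm_dominated_graphD(2)[OF good]] .
  ultimately show ?thesis
    using that bound by blast
qed

section \<open>Norming functionals over the scalar field\<close>

context
  fixes sm :: "'k::real_normed_field \<Rightarrow> 'a::real_normed_vector \<Rightarrow> 'a"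
  assumes sa: "scalar_action sm"
begin

lemma sm_of_real: "sm (of_real r) x = r *\<^sub>R x"
  and sm_mult: "sm (a * b) x = sm a (sm b x)"
  and sm_add_left: "sm (a + b) x = sm a x + sm b x"
  and sm_add_right: "sm a (x + y) = sm a x + sm a y"
  and norm_sm: "norm (sm a x) = norm a * norm x"
  using sa unfolding scalar_action_def by blast+

lemma sm_scaleR: "sm c (r *\<^sub>R x) = r *\<^sub>R sm c x"
  by (metis sm_of_real sm_mult mult.commute)

lemma bounded_linear_sm: "bounded_linear (sm c)"
  by (rule bounded_linear_intro[where K = "norm c"])
    (simp_all add: sm_add_right sm_scaleR norm_sm mult.commute)

lemma bounded_linear_sm_left: "bounded_linear (\<lambda>c. sm c q)"
  by (rule bounded_linear_intro[where K = "norm q"])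
    (simp_all add: sm_add_left norm_sm scaleR_conv_of_real sm_mult sm_of_real)

lemma norming_K_functional_of_bound:
  assumes F: "bounded_linear F" "\<And>c x. F (sm c x) = c * F x" "\<And>x. norm (F x) \<le> norm x"
    and p: "norm p = 1" "F p = 1"
  shows "\<exists>f. K_functional sm f \<and> norm f = 1 \<and> blinfun_apply f p = 1"
proof (intro exI conjI)
  have apply_F: "blinfun_apply (Blinfun F) = F"
    using F(1) by (rule bounded_linear_Blinfun_apply)
  show "K_functional sm (Blinfun F)"
    unfolding K_functional_def apply_F by (simp add: F(2))
  show "blinfun_apply (Blinfun F) p = 1"
    by (simp add: apply_F p)
  have "norm (Blinfun F) \<le> 1"
    by (rule norm_blinfun_bound) (simp_all add: apply_F F(3))
  moreover have "1 \<le> norm (Blinfun F)"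
    using norm_blinfun[of "Blinfun F" p] by (simp add: apply_F p)
  ultimately show "norm (Blinfun F) = 1"
    by simp
qed

lemma complexified_functional:
  fixes i :: 'k
  assumes i: "i * i = -1" and g: "bounded_linear g" "\<And>x. \<bar>g x\<bar> \<le> norm x"
  defines "F \<equiv> \<lambda>x. of_real (g x) - of_real (g (sm i x)) * i"
  shows "bounded_linear F" "\<And>c x. F (sm c x) = c * F x" "\<And>x. norm (F x) \<le> norm x"
proof -
  have g_add: "g (x + y) = g x + g y" and g_scale: "g (r *\<^sub>R x) = r * g x" for x y r
    using g(1) by (simp_all add: linear_add linear_scale bounded_linear.linear)
  have ii: "i * (i * x) = - x" for x
    using i by (metis mult.assoc mult_minus1)
  have "bounded_linear (\<lambda>x. of_real (g x) :: 'k)"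
    using bounded_linear_compose[OF bounded_linear_of_real g(1)] by (simp add: o_def)
  moreover have "bounded_linear (\<lambda>x. of_real (g (sm i x)) * i :: 'k)"
    using bounded_linear_compose[OF bounded_linear_mult_left[of i]
        bounded_linear_compose[OF bounded_linear_compose[OF bounded_linear_of_real g(1)] bounded_linear_sm]]
    by (simp add: o_def)
  ultimately show "bounded_linear F"
    unfolding F_def by (rule bounded_linear_sub)
  have F_i: "F (sm i x) = i * F x" for x
  proof -
    have "sm i (sm i x) = - x"
      using sm_of_real[of "-1" x] by (simp add: i flip: sm_mult)
    moreover have "g (- x) = - g x"
      using g_scale[of "-1" x] by simp
    ultimately show ?thesis
      by (simp add: F_def algebra_simps ii)
  qed
  show F_linear: "F (sm c x) = c * F x" for c x
  proof -
    obtain a b where c: "c = of_real a + of_real b * i"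
      using imag_unit_span[OF i] by blast
    have "sm c x = a *\<^sub>R x + b *\<^sub>R sm i x"
      by (simp add: c sm_add_left sm_mult sm_of_real)
    then have "F (sm c x) = of_real a * F x + of_real b * F (sm i x)"
      by (simp add: F_def g_add g_scale sm_add_right sm_scaleR algebra_simps)
    then show ?thesis
      by (simp add: F_i c algebra_simps)
  qed
  have g_of_F: "g y = r" if "F y = of_real r" for y r
  proof (cases "g (sm i y) = 0")
    case False
    have "of_real (g (sm i y)) * i = of_real (g y - r)"
      using that by (simp add: F_def algebra_simps)
    then have "i = of_real ((g y - r) / g (sm i y))"
      using False by (simp add: field_simps)
    then show ?thesis
      using imag_unit_not_real[OF i] by blast
  qed (use that in \<open>simp add: F_def\<close>)
  show "norm (F x) \<le> norm x" for x
  proof (cases "F x = 0")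
    case False
    define u where "u = of_real (norm (F x)) / F x"
    have "norm u = 1"
      using False by (simp add: u_def norm_divide)
    have "g (sm u x) = norm (F x)"
      using False by (intro g_of_F) (simp add: F_linear u_def)
    then have "norm (F x) \<le> norm (sm u x)"
      using g(2)[of "sm u x"] by simp
    then show ?thesis
      by (simp add: norm_sm \<open>norm u = 1\<close>)
  qed simp
qed

lemma complexified_norming_functional:
  fixes i :: 'k
  assumes i: "i * i = -1"
    and g: "bounded_linear g" "\<And>x. \<bar>g x\<bar> \<le> norm x" and p: "norm p = 1" "g p = 1"
  shows "\<exists>f. K_functional sm f \<and> norm f = 1 \<and> blinfun_apply f p = 1"
proof -
  note F = complexified_functional[OF i g]
  define t where "t = g (sm i p)"
  have "norm (of_real 1 + of_real (- t) * i :: 'k) \<le> 1"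
    using F(3)[of p] by (simp add: p t_def)
  then have "sqrt (1 + t\<^sup>2) \<le> 1"
    using norm_of_real_add_imag_unit[OF i, of 1 "- t"] by simp
  then have "t\<^sup>2 \<le> 0"
    by simp
  then have "t = 0"
    by simp
  then show ?thesis
    using norming_K_functional_of_bound[OF F p(1)] by (simp add: p t_def)
qed

lemma exists_norming_K_functional:
  assumes p: "norm p = 1"
  shows "\<exists>f. K_functional sm f \<and> norm f = 1 \<and> blinfun_apply f p = 1"
proof -
  have "p \<noteq> 0"
    using p by auto
  then obtain g where g: "bounded_linear g" "g p = norm p" "\<And>x. \<bar>g x\<bar> \<le> norm x"
    using real_Hahn_Banach_norming by blast
  show ?thesis
  proof (cases "\<exists>i::'k. i * i = -1")
    case True
    then show ?thesis
      using complexified_norming_functional g p by auto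
  next
    case False
    have "bounded_linear (\<lambda>x. of_real (g x) :: 'k)"
      using bounded_linear_compose[OF bounded_linear_of_real g(1)] by (simp add: o_def)
    moreover have "of_real (g (sm c x)) = c * of_real (g x)" for c x
    proof -
      obtain a where "c = of_real a"
        using of_real_if_no_imag_unit False by blast
      then show ?thesis
        using g(1) by (simp add: sm_of_real linear_scale bounded_linear.linear)
    qed
    ultimately show ?thesis
      using g p by (intro norming_K_functional_of_bound[where F = "\<lambda>x. of_real (g x)"]) auto
  qed
qed

end

section \<open>Numerical radius and the Bishop-Phelps-Bollobas property for functionals\<close>

lemma norm_apply_le_of_Pi_X:
  assumes "(x, f) \<in> Pi_X sm"
  shows "norm (blinfun_apply f (blinfun_apply T x)) \<le> norm T"
proof -
  have "norm (blinfun_apply f (blinfun_apply T x)) \<le> norm f * norm (blinfun_apply T x)"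
    by (rule norm_blinfun)
  also have "\<dots> \<le> norm f * (norm T * norm x)"
    by (intro mult_left_mono norm_blinfun) simp
  finally show ?thesis
    using assms by (simp add: Pi_X_def)
qed

lemma num_radius_upper:
  assumes "(x, f) \<in> Pi_X sm"
  shows "norm (blinfun_apply f (blinfun_apply T x)) \<le> num_radius sm T"
  unfolding num_radius_def
proof (rule cSup_upper)
  show "bdd_above ((\<lambda>(x, f). norm (blinfun_apply f (blinfun_apply T x))) ` Pi_X sm)"
    by (rule bdd_aboveI[where M = "norm T"]) (auto intro: norm_apply_le_of_Pi_X)
qed (use assms in force)

lemma num_radius_least:
  assumes "Pi_X sm \<noteq> {}"
    and "\<And>x f. (x, f) \<in> Pi_X sm \<Longrightarrow> norm (blinfun_apply f (blinfun_apply T x)) \<le> b"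
  shows "num_radius sm T \<le> b"
  unfolding num_radius_def using assms by (intro cSup_least) auto

lemma num_radius_le_norm: "Pi_X sm \<noteq> {} \<Longrightarrow> num_radius sm T \<le> norm T"
  by (rule num_radius_least) (auto intro: norm_apply_le_of_Pi_X)

lemma num_radius_nonneg:
  assumes "Pi_X sm \<noteq> {}"
  shows "0 \<le> num_radius sm T"
proof -
  obtain x f where "(x, f) \<in> Pi_X sm"
    using assms by auto
  then show ?thesis
    by (meson norm_ge_zero num_radius_upper order_trans)
qed

lemma one_le_num_radius_of_num_index:
  assumes "Pi_X sm \<noteq> {}" and "num_index sm = 1" and "K_operator sm T" "norm T = 1"
  shows "1 \<le> num_radius sm T"
proof -
  have "bdd_below {num_radius sm T | T. K_operator sm T \<and> norm T = 1}"
    unfolding bdd_below_def using num_radius_nonneg[OF assms(1)] by blast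
  then have "Inf {num_radius sm T | T. K_operator sm T \<and> norm T = 1} \<le> num_radius sm T"
    using assms(3,4) by (intro cInf_lower) auto
  then show ?thesis
    using assms(2) by (simp add: num_index_def)
qed

definition BPBpp_functionals :: "('k::real_normed_field \<Rightarrow> 'a::real_normed_vector \<Rightarrow> 'a) \<Rightarrow> real \<Rightarrow> real \<Rightarrow> bool" where
  "BPBpp_functionals sm \<epsilon> \<eta> \<longleftrightarrow>
     (\<forall>q k. norm q = 1 \<and> K_functional sm k \<and> norm k = 1 \<and> norm (blinfun_apply k q) > 1 - \<eta> \<longrightarrow>
        (\<exists>h. K_functional sm h \<and> norm h \<le> 1 \<and> norm (blinfun_apply h q) = 1 \<and> norm (h - k) < \<epsilon>))"

context
  fixes sm :: "'k::real_normed_field \<Rightarrow> 'a::real_normed_vector \<Rightarrow> 'a"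
  assumes sa: "scalar_action sm"
begin

lemma Pi_X_nonempty:
  assumes "norm q = 1"
  obtains f where "(q, f) \<in> Pi_X sm"
  using exists_norming_K_functional[OF sa assms] assms by (auto simp: Pi_X_def)

lemma K_operator_scaleR: "K_operator sm T \<Longrightarrow> K_operator sm (r *\<^sub>R T)"
  unfolding K_operator_def by (simp add: sm_scaleR[OF sa] blinfun.scaleR_left)

lemma norm_le_one_of_num_radius:
  assumes ne: "Pi_X sm \<noteq> {}" and n1: "num_index sm = 1"
    and S: "K_operator sm S" "num_radius sm S = 1"
  shows "norm S \<le> 1"
proof (cases "S = 0")
  case True
  then show ?thesis
    using num_radius_le_norm[OF ne, of S] S by simp
next
  case False
  define T where "T = (1 / norm S) *\<^sub>R S"
  have "1 \<le> num_radius sm T"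
    unfolding T_def using False
    by (intro one_le_num_radius_of_num_index[OF ne n1 K_operator_scaleR[OF S(1)]]) simp
  also have "num_radius sm T \<le> 1 / norm S"
  proof (rule num_radius_least[OF ne])
    fix x f assume "(x, f) \<in> Pi_X sm"
    then have "norm (blinfun_apply f (blinfun_apply S x)) \<le> 1"
      using num_radius_upper[of x f sm S] S by simp
    moreover have "norm (blinfun_apply f (blinfun_apply T x))
        = (1 / norm S) * norm (blinfun_apply f (blinfun_apply S x))"
      by (simp add: T_def blinfun.scaleR_right blinfun.scaleR_left)
    ultimately show "norm (blinfun_apply f (blinfun_apply T x)) \<le> 1 / norm S"
      by (simp add: divide_right_mono)
  qed
  finally show ?thesis
    using False by (simp add: field_simps)
qed

lemma rank_one_K_operator:
  assumes k: "K_functional sm k" "norm k = 1" and q: "norm q = 1"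
  obtains T where "K_operator sm T" "norm T = 1" "\<And>y. blinfun_apply T y = sm (blinfun_apply k y) q"
proof
  have "bounded_linear (\<lambda>y. sm (blinfun_apply k y) q)"
    using bounded_linear_compose[OF bounded_linear_sm_left[OF sa, of q] blinfun.bounded_linear_right[of k]]
    by (simp add: o_def)
  then show T: "blinfun_apply (Blinfun (\<lambda>y. sm (blinfun_apply k y) q)) y = sm (blinfun_apply k y) q" for y
    by (simp add: bounded_linear_Blinfun_apply)
  then show "K_operator sm (Blinfun (\<lambda>y. sm (blinfun_apply k y) q))"
    using k(1) by (simp add: K_operator_def K_functional_def sm_mult[OF sa])
  have norm_T: "norm (blinfun_apply (Blinfun (\<lambda>y. sm (blinfun_apply k y) q)) y) = norm (blinfun_apply k y)" for y
    by (simp add: T norm_sm[OF sa] q)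
  show "norm (Blinfun (\<lambda>y. sm (blinfun_apply k y) q)) = 1"
  proof (rule antisym)
    show "norm (Blinfun (\<lambda>y. sm (blinfun_apply k y) q)) \<le> 1"
      by (rule norm_blinfun_bound) (use norm_blinfun[of k] k(2) in \<open>simp_all add: norm_T\<close>)
    have "norm k \<le> norm (Blinfun (\<lambda>y. sm (blinfun_apply k y) q))"
      by (rule norm_blinfun_bound) (simp_all add: norm_T[symmetric] norm_blinfun)
    then show "1 \<le> norm (Blinfun (\<lambda>y. sm (blinfun_apply k y) q))"
      using k(2) by simp
  qed
qed

lemma BPBpp_functionals_of_BPBpp_nu:
  assumes bp: "BPBpp_nu sm" and n1: "num_index sm = 1" and \<epsilon>: "\<epsilon> > 0"
  obtains \<eta> where "\<eta> > 0" "BPBpp_functionals sm \<epsilon> \<eta>"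
proof -
  obtain \<eta> where \<eta>: "\<eta> > 0" and H: "\<And>T x f. K_operator sm T \<Longrightarrow> num_radius sm T = 1 \<Longrightarrow>
      (x, f) \<in> Pi_X sm \<Longrightarrow> norm (blinfun_apply f (blinfun_apply T x)) > 1 - \<eta> \<Longrightarrow>
      \<exists>S. K_operator sm S \<and> num_radius sm S = 1 \<and>
           norm (blinfun_apply f (blinfun_apply S x)) = 1 \<and> norm (S - T) < \<epsilon>"
    using bp \<epsilon> unfolding BPBpp_nu_def by meson
  have "BPBpp_functionals sm \<epsilon> \<eta>"
    unfolding BPBpp_functionals_def
  proof (intro allI impI, elim conjE)
    fix q k assume q: "norm q = 1" and k: "K_functional sm k" "norm k = 1"
      and kq: "norm (blinfun_apply k q) > 1 - \<eta>"
    obtain f where f: "(q, f) \<in> Pi_X sm"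
      using Pi_X_nonempty[OF q] .
    then have ne: "Pi_X sm \<noteq> {}"
      by blast
    have f_K: "K_functional sm f" and norm_f: "norm f = 1" and fq: "blinfun_apply f q = 1"
      using f by (simp_all add: Pi_X_def)
    obtain T where T: "K_operator sm T" "norm T = 1" "\<And>y. blinfun_apply T y = sm (blinfun_apply k y) q"
      using rank_one_K_operator[OF k q] by blast
    have fT: "blinfun_apply f (blinfun_apply T y) = blinfun_apply k y" for y
      using f_K fq by (simp add: T(3) K_functional_def)
    have "num_radius sm T = 1"
      using num_radius_le_norm[OF ne, of T] one_le_num_radius_of_num_index[OF ne n1 T(1,2)] T(2) by simp
    then obtain S where S: "K_operator sm S" "num_radius sm S = 1"
      and fSq: "norm (blinfun_apply f (blinfun_apply S q)) = 1" and ST: "norm (S - T) < \<epsilon>"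
      using H[OF T(1) _ f] kq fT by auto
    have "norm S \<le> 1"
      by (rule norm_le_one_of_num_radius[OF ne n1 S])
    show "\<exists>h. K_functional sm h \<and> norm h \<le> 1 \<and> norm (blinfun_apply h q) = 1 \<and> norm (h - k) < \<epsilon>"
    proof (intro exI conjI)
      show "K_functional sm (f o\<^sub>L S)"
        using f_K S(1) by (simp add: K_functional_def K_operator_def)
      show "norm (f o\<^sub>L S) \<le> 1"
        using norm_blinfun_compose[of f S] norm_f \<open>norm S \<le> 1\<close> by simp
      show "norm (blinfun_apply (f o\<^sub>L S) q) = 1"
        using fSq by simp
      have "(f o\<^sub>L S) - k = f o\<^sub>L (S - T)"
        by (rule blinfun_eqI) (simp add: blinfun.diff_left blinfun.diff_right fT)
      then have "norm ((f o\<^sub>L S) - k) \<le> norm (S - T)"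
        using norm_blinfun_compose[of f "S - T"] norm_f by simp
      then show "norm ((f o\<^sub>L S) - k) < \<epsilon>"
        using ST by simp
    qed
  qed
  then show ?thesis
    using \<eta> that by blast
qed

end

section \<open>Modulus of smoothness\<close>

lemma norm_blinfun_apply_le: "norm f \<le> 1 \<Longrightarrow> norm (blinfun_apply f x) \<le> norm x"
  using norm_blinfun[of f x] mult_right_mono[of "norm f" 1 "norm x"] by simp

lemma K_functional_rotation:
  fixes h :: "'a::real_normed_vector \<Rightarrow>\<^sub>L 'k::real_normed_field"
  assumes h: "K_functional sm h" "norm h \<le> 1" and a: "norm (blinfun_apply h a) = norm a" "a \<noteq> 0"
  obtains h' where "K_functional sm h'" "norm h' \<le> 1" "blinfun_apply h' a = of_real (norm a)"
    "norm (h' - h) \<le> norm (of_real (norm a) - blinfun_apply h a) / norm a"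
proof -
  have ha: "blinfun_apply h a \<noteq> 0"
    using a by auto
  define c where "c = of_real (norm a) / blinfun_apply h a"
  have norm_c: "norm c = 1"
    using a by (simp add: c_def norm_divide)
  have bl: "bounded_linear (\<lambda>z. c * blinfun_apply h z)"
    by (rule bounded_linear_compose[OF bounded_linear_mult_right blinfun.bounded_linear_right,
          unfolded o_def])
  define h' where "h' = Blinfun (\<lambda>z. c * blinfun_apply h z)"
  have h': "blinfun_apply h' z = c * blinfun_apply h z" for z
    unfolding h'_def using bl by (simp add: bounded_linear_Blinfun_apply)
  show ?thesis
  proof
    show "K_functional sm h'"
      using h(1) by (simp add: K_functional_def h' mult.left_commute)
    show "norm h' \<le> 1"
      by (rule norm_blinfun_bound) (simp_all add: h' norm_mult norm_c norm_blinfun_apply_le h(2))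
    show "blinfun_apply h' a = of_real (norm a)"
      using ha by (simp add: h' c_def)
    have "norm (h' - h) \<le> norm (c - 1)"
    proof (rule norm_blinfun_bound)
      fix z
      have "norm (blinfun_apply (h' - h) z) = norm (c - 1) * norm (blinfun_apply h z)"
        by (simp add: blinfun.diff_left h' left_diff_distrib flip: norm_mult)
      also have "\<dots> \<le> norm (c - 1) * norm z"
        using norm_blinfun_apply_le[OF h(2)] by (simp add: mult_left_mono)
      finally show "norm (blinfun_apply (h' - h) z) \<le> norm (c - 1) * norm z" .
    qed simp
    also have "c - 1 = (of_real (norm a) - blinfun_apply h a) / blinfun_apply h a"
      using ha by (simp add: c_def field_simps)
    finally show "norm (h' - h) \<le> norm (of_real (norm a) - blinfun_apply h a) / norm a"
      by (simp add: norm_divide a)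
  qed
qed

lemma BPBpp_functionalsD:
  assumes "BPBpp_functionals sm \<epsilon> \<eta>" "norm q = 1" "K_functional sm k" "norm k = 1"
    "norm (blinfun_apply k q) > 1 - \<eta>"
  shows "\<exists>h. K_functional sm h \<and> norm h \<le> 1 \<and> norm (blinfun_apply h q) = 1 \<and> norm (h - k) < \<epsilon>"
  using assms unfolding BPBpp_functionals_def by blast

lemma norming_functional_shift_estimates:
  fixes k :: "'a::real_normed_vector \<Rightarrow>\<^sub>L 'k::real_normed_field"
  assumes x: "norm x = 1" and y: "norm y = 1" and k: "norm k = 1" "blinfun_apply k x = 1"
    and \<tau>: "0 < \<tau>"
  shows "1 - \<tau> \<le> norm (x + \<tau> *\<^sub>R y)" "norm (x + \<tau> *\<^sub>R y) \<le> 1 + \<tau>"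
    "1 - \<tau> \<le> norm (blinfun_apply k (x + \<tau> *\<^sub>R y))"
    "norm (blinfun_apply k (x + \<tau> *\<^sub>R y) - of_real (norm (x + \<tau> *\<^sub>R y))) \<le> 2 * \<tau>"
proof -
  show norm_a: "1 - \<tau> \<le> norm (x + \<tau> *\<^sub>R y)" "norm (x + \<tau> *\<^sub>R y) \<le> 1 + \<tau>"
    using norm_triangle_ineq[of x "\<tau> *\<^sub>R y"] norm_diff_ineq[of x "\<tau> *\<^sub>R y"] x y \<tau> by simp_all
  have ka: "blinfun_apply k (x + \<tau> *\<^sub>R y) = 1 + of_real \<tau> * blinfun_apply k y"
    by (simp add: blinfun.add_right blinfun.scaleR_right k(2) scaleR_conv_of_real)
  have small: "norm (of_real \<tau> * blinfun_apply k y) \<le> \<tau>"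
    using norm_blinfun_apply_le[of k y] k(1) y \<tau> by (simp add: norm_mult mult_left_le)
  then show "1 - \<tau> \<le> norm (blinfun_apply k (x + \<tau> *\<^sub>R y))"
    using norm_diff_ineq[of "1 :: 'k" "of_real \<tau> * blinfun_apply k y"] by (simp add: ka)
  have "blinfun_apply k (x + \<tau> *\<^sub>R y) - of_real (norm (x + \<tau> *\<^sub>R y))
      = of_real (1 - norm (x + \<tau> *\<^sub>R y)) + of_real \<tau> * blinfun_apply k y"
    by (simp add: ka)
  then have "norm (blinfun_apply k (x + \<tau> *\<^sub>R y) - of_real (norm (x + \<tau> *\<^sub>R y)))
      \<le> \<bar>1 - norm (x + \<tau> *\<^sub>R y)\<bar> + norm (of_real \<tau> * blinfun_apply k y)"
    by (metis norm_of_real norm_triangle_ineq)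
  then show "norm (blinfun_apply k (x + \<tau> *\<^sub>R y) - of_real (norm (x + \<tau> *\<^sub>R y))) \<le> 2 * \<tau>"
    using norm_a small by linarith
qed

lemma norming_functional_near:
  fixes sm :: "'k::real_normed_field \<Rightarrow> 'a::real_normed_vector \<Rightarrow> 'a"
  assumes bpb: "BPBpp_functionals sm \<epsilon> \<eta>"
    and x: "norm x = 1" and y: "norm y = 1"
    and k: "K_functional sm k" "norm k = 1" "blinfun_apply k x = 1"
    and \<tau>: "0 < \<tau>" "\<tau> \<le> 1 / 2" "2 * \<tau> < \<eta>"
  obtains h where "K_functional sm h" "norm h \<le> 1"
    "blinfun_apply h (x + \<tau> *\<^sub>R y) = of_real (norm (x + \<tau> *\<^sub>R y))" "norm (h - k) \<le> 2 * \<epsilon> + 4 * \<tau>"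
proof -
  define a where "a = x + \<tau> *\<^sub>R y"
  note est = norming_functional_shift_estimates[OF x y k(2,3) \<tau>(1), folded a_def]
  have a_pos: "norm a > 0"
    using est(1) \<tau>(2) by linarith
  define q where "q = (1 / norm a) *\<^sub>R a"
  have q: "norm q = 1"
    using a_pos by (simp add: q_def)
  have "1 - \<eta> < (1 - \<tau>) / (1 + \<tau>)"
    using \<tau> by (simp add: field_simps) (smt (verit) mult_pos_pos)
  also have "\<dots> \<le> norm (blinfun_apply k a) / norm a"
    using est \<tau> a_pos by (intro frac_le) auto
  also have "\<dots> = norm (blinfun_apply k q)"
    using a_pos by (simp add: q_def blinfun.scaleR_right)
  finally obtain h1 where h1: "K_functional sm h1" "norm h1 \<le> 1" "norm (blinfun_apply h1 q) = 1"
    and h1_k: "norm (h1 - k) < \<epsilon>"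
    using BPBpp_functionalsD[OF bpb q k(1,2)] by blast
  have "norm (blinfun_apply h1 a) = norm a"
    using h1(3) a_pos by (simp add: q_def blinfun.scaleR_right)
  moreover have "a \<noteq> 0"
    using a_pos by auto
  ultimately obtain h where h: "K_functional sm h" "norm h \<le> 1" "blinfun_apply h a = of_real (norm a)"
    and h_h1: "norm (h - h1) \<le> norm (of_real (norm a) - blinfun_apply h1 a) / norm a"
    by (rule K_functional_rotation[OF h1(1,2)])
  have "norm (of_real (norm a) - blinfun_apply h1 a)
      \<le> norm (of_real (norm a) - blinfun_apply k a) + norm (blinfun_apply (k - h1) a)"
    using norm_triangle_ineq[of "of_real (norm a) - blinfun_apply k a" "blinfun_apply (k - h1) a"]
    by (simp add: blinfun.diff_left)
  also have "\<dots> \<le> 2 * \<tau> + \<epsilon> * norm a"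
  proof (rule add_mono)
    show "norm (of_real (norm a) - blinfun_apply k a) \<le> 2 * \<tau>"
      using est(4) by (simp add: norm_minus_commute)
    have "norm (blinfun_apply (k - h1) a) \<le> norm (k - h1) * norm a"
      by (rule norm_blinfun)
    also have "\<dots> \<le> \<epsilon> * norm a"
      using h1_k by (intro mult_right_mono) (simp_all add: norm_minus_commute)
    finally show "norm (blinfun_apply (k - h1) a) \<le> \<epsilon> * norm a" .
  qed
  finally have "norm (of_real (norm a) - blinfun_apply h1 a) / norm a \<le> (2 * \<tau> + \<epsilon> * norm a) / norm a"
    using a_pos by (simp add: divide_right_mono)
  then have "norm (h - h1) \<le> 2 * \<tau> / norm a + \<epsilon>"
    using h_h1 a_pos by (simp add: add_divide_distrib)
  also have "2 * \<tau> / norm a \<le> 4 * \<tau>"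
    using est(1) \<tau> a_pos by (simp add: field_simps)
  finally have "norm (h - k) \<le> 2 * \<epsilon> + 4 * \<tau>"
    using norm_triangle_ineq[of "h - h1" "h1 - k"] h1_k by simp
  with h show ?thesis
    using that unfolding a_def by blast
qed

lemma norm_add_norm_diff_le:
  fixes sm :: "'k::real_normed_field \<Rightarrow> 'a::real_normed_vector \<Rightarrow> 'a" and x y :: 'a
  assumes sa: "scalar_action sm" and bpb: "BPBpp_functionals sm \<epsilon> \<eta>"
    and x: "norm x = 1" and y: "norm y = 1" and \<tau>: "0 < \<tau>" "\<tau> \<le> 1 / 2" "2 * \<tau> < \<eta>"
  shows "(norm (x + \<tau> *\<^sub>R y) + norm (x - \<tau> *\<^sub>R y)) / 2 - 1 \<le> \<tau> * (2 * \<epsilon> + 4 * \<tau>)"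
proof -
  obtain k where k: "K_functional sm k" "norm k = 1" "blinfun_apply k x = 1"
    using exists_norming_K_functional[OF sa x] by blast
  obtain h where h: "norm h \<le> 1" "blinfun_apply h (x + \<tau> *\<^sub>R y) = of_real (norm (x + \<tau> *\<^sub>R y))"
    and h_k: "norm (h - k) \<le> 2 * \<epsilon> + 4 * \<tau>"
    using norming_functional_near[OF bpb x y k \<tau>] by blast
  obtain g where g: "norm g \<le> 1" "blinfun_apply g (x + \<tau> *\<^sub>R - y) = of_real (norm (x + \<tau> *\<^sub>R - y))"
    and g_k: "norm (g - k) \<le> 2 * \<epsilon> + 4 * \<tau>"
    using norming_functional_near[OF bpb x _ k \<tau>, of "- y"] y by auto
  have "norm (x + \<tau> *\<^sub>R y) + norm (x - \<tau> *\<^sub>R y)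
      = norm (of_real (norm (x + \<tau> *\<^sub>R y) + norm (x - \<tau> *\<^sub>R y)) :: 'k)"
    by (simp only: norm_of_real) simp
  also have "of_real (norm (x + \<tau> *\<^sub>R y) + norm (x - \<tau> *\<^sub>R y))
      = blinfun_apply h x + blinfun_apply g x + of_real \<tau> * blinfun_apply (h - g) y"
    using h(2) g(2) by (simp add: blinfun.add_right blinfun.diff_right blinfun.scaleR_right
        blinfun.diff_left scaleR_conv_of_real algebra_simps)
  also have "norm \<dots> \<le> norm (blinfun_apply h x) + norm (blinfun_apply g x)
      + \<tau> * norm (blinfun_apply (h - g) y)"
    using \<tau>(1) norm_triangle_ineq[of "blinfun_apply h x" "blinfun_apply g x"]
      norm_triangle_ineq[of "blinfun_apply h x + blinfun_apply g x" "of_real \<tau> * blinfun_apply (h - g) y"]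
    by (simp add: norm_mult)
  also have "\<dots> \<le> 1 + 1 + \<tau> * (4 * \<epsilon> + 8 * \<tau>)"
  proof (intro add_mono mult_left_mono)
    show "norm (blinfun_apply h x) \<le> 1" "norm (blinfun_apply g x) \<le> 1"
      using norm_blinfun_apply_le h(1) g(1) x by metis+
    have "norm (blinfun_apply (h - g) y) \<le> norm ((h - k) - (g - k))"
      using norm_blinfun_apply_le[of "(h - k) - (g - k)" y] y norm_blinfun[of "h - g" y] by simp
    also have "\<dots> \<le> 4 * \<epsilon> + 8 * \<tau>"
      using norm_triangle_ineq4[of "h - k" "g - k"] h_k g_k by simp
    finally show "norm (blinfun_apply (h - g) y) \<le> 4 * \<epsilon> + 8 * \<tau>" .
  qed (use \<tau> in simp)
  finally show ?thesis
    by (simp add: algebra_simps)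
qed

lemma modulus_smoothness_nonneg:
  fixes u :: "'a::real_normed_vector"
  assumes u: "u \<noteq> 0" and \<tau>: "0 \<le> \<tau>" "\<tau> \<le> 1"
  shows "0 \<le> modulus_smoothness TYPE('a) \<tau>"
proof -
  let ?S = "{(norm (x + \<tau> *\<^sub>R y) + norm (x - \<tau> *\<^sub>R y)) / 2 - 1 | x y :: 'a. norm x = 1 \<and> norm y = 1}"
  define v where "v = sgn u"
  have v: "norm v = 1"
    using u by (simp add: v_def norm_sgn)
  have "v + \<tau> *\<^sub>R v = (1 + \<tau>) *\<^sub>R v" "v - \<tau> *\<^sub>R v = (1 - \<tau>) *\<^sub>R v"
    by (simp_all add: algebra_simps)
  then have "norm (v + \<tau> *\<^sub>R v) = 1 + \<tau>" "norm (v - \<tau> *\<^sub>R v) = 1 - \<tau>"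
    using v \<tau> by simp_all
  then have "0 \<in> ?S"
    using v by force
  moreover have "(norm (x + \<tau> *\<^sub>R y) + norm (x - \<tau> *\<^sub>R y)) / 2 - 1 \<le> \<tau>"
    if "norm x = 1" "norm y = 1" for x y :: 'a
    using norm_triangle_ineq[of x "\<tau> *\<^sub>R y"] norm_triangle_ineq4[of x "\<tau> *\<^sub>R y"] that \<tau>
    by (simp add: field_simps)
  then have "bdd_above ?S"
    by (auto intro: bdd_aboveI[where M = \<tau>])
  ultimately show ?thesis
    unfolding modulus_smoothness_def by (rule cSup_upper)
qed

lemma modulus_smoothness_le:
  fixes u :: "'a::real_normed_vector"
  assumes u: "u \<noteq> 0"
    and bound: "\<And>x y :: 'a. norm x = 1 \<Longrightarrow> norm y = 1 \<Longrightarrow>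
      (norm (x + \<tau> *\<^sub>R y) + norm (x - \<tau> *\<^sub>R y)) / 2 - 1 \<le> c"
  shows "modulus_smoothness TYPE('a) \<tau> \<le> c"
proof -
  have "norm (sgn u) = 1"
    using u by (simp add: norm_sgn)
  then show ?thesis
    unfolding modulus_smoothness_def using bound by (intro cSup_least) blast+
qed

lemma modulus_smoothness_div_le:
  fixes sm :: "'k::real_normed_field \<Rightarrow> 'a::real_normed_vector \<Rightarrow> 'a" and u :: 'a
  assumes sa: "scalar_action sm" and u: "u \<noteq> 0" and bpb: "BPBpp_functionals sm \<epsilon> \<eta>"
    and \<tau>: "0 < \<tau>" "\<tau> \<le> 1 / 2" "2 * \<tau> < \<eta>"
  shows "\<bar>modulus_smoothness TYPE('a) \<tau> / \<tau>\<bar> \<le> 2 * \<epsilon> + 4 * \<tau>"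
proof -
  have "0 \<le> modulus_smoothness TYPE('a) \<tau>"
    using modulus_smoothness_nonneg[OF u] \<tau> by simp
  moreover have "modulus_smoothness TYPE('a) \<tau> \<le> \<tau> * (2 * \<epsilon> + 4 * \<tau>)"
    using norm_add_norm_diff_le[OF sa bpb _ _ \<tau>] by (intro modulus_smoothness_le[OF u])
  ultimately show ?thesis
    using \<tau>(1) by (simp add: pos_divide_le_eq mult.commute)
qed

theorem mainTheorem4:
  fixes sm :: "'k::real_normed_field \<Rightarrow> 'a::banach \<Rightarrow> 'a"
  assumes "scalar_action sm"
    and "\<exists>x::'a. x \<noteq> 0"
    and "num_index sm = 1"
    and "BPBpp_nu sm"
  shows "uniformly_smooth TYPE('a)"
  unfolding uniformly_smooth_def
proof (rule tendstoI)
  fix e :: real assume e: "e > 0"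
  obtain u :: 'a where u: "u \<noteq> 0"
    using assms(2) by blast
  obtain \<eta> where \<eta>: "\<eta> > 0" and bpb: "BPBpp_functionals sm (e / 12) \<eta>"
    using BPBpp_functionals_of_BPBpp_nu[OF assms(1,4,3), of "e / 12"] e by auto
  have "dist (modulus_smoothness TYPE('a) \<tau> / \<tau>) 0 < e"
    if "0 < \<tau>" "\<tau> < min (min (\<eta> / 2) (1 / 2)) (e / 12)" for \<tau>
    using modulus_smoothness_div_le[OF assms(1) u bpb, of \<tau>] that by simp
  then show "\<forall>\<^sub>F \<tau> in at_right 0. dist (modulus_smoothness TYPE('a) \<tau> / \<tau>) 0 < e"
    unfolding eventually_at_right_field using \<eta> e
    by (intro exI[of _ "min (min (\<eta> / 2) (1 / 2)) (e / 12)"]) auto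
qed

end
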